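(* Let $(W_{i,t})_{i,t\in\mathbb{Z}}$ be i.i.d. real-valued with law $\lambda$ whose support contains $0$. Let $Y_{\cdot,0}=(Y_{i,0})_{i\in\mathbb{Z}}\sim\mu$ independent of the weights and $Y_{\cdot,t+1}=\mathcal A(Y_{\cdot,t},W_{\cdot,t})$. Suppose $\mu$ is invariant ($Y_{\cdot,t}\sim\mu$ for all $t$), $\mathbb{E}|Y_{0,0}|<\infty$, and the array $\{(Y_{i,t},W_{i,t})\}_{i,t}$ is stationary and ergodic under shifts in $i$ and in $t$. Then either $Y_{0,0}\ge0$ a.s. or $Y_{0,0}\le0$ a.s.
   Context: Signed store update for the SJR model: for $Y\in\mathbb{R}^{\mathbb{Z}}$ and $W\in\mathbb{R}^{\mathbb{Z}}$ (with $x^+=\max(x,0)$, $x^-=\max(-x,0)$), $$\mathcal A(Y,W)_i=(Y_i^+-W_i^+)^+-(Y_i^-\wedge W_i^-)+(Y_{i-1}^+\wedge W_{i-1}^+)-(Y_{i-1}^--W_{i-1}^-)^+.$$ *)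

theory Defs
  imports "HOL-Probability.Probability"
begin

definition pos_part :: "real \<Rightarrow> real" where "pos_part x = max x 0"
definition neg_part :: "real \<Rightarrow> real" where "neg_part x = max (- x) 0"

definition sjr_update :: "(int \<Rightarrow> real) \<Rightarrow> (int \<Rightarrow> real) \<Rightarrow> int \<Rightarrow> real" where
  "sjr_update Y W i =
     pos_part (pos_part (Y i) - pos_part (W i))
     - min (neg_part (Y i)) (neg_part (W i))
     + min (pos_part (Y (i - 1))) (pos_part (W (i - 1)))
     - pos_part (neg_part (Y (i - 1)) - neg_part (W (i - 1)))"

definition measure_support :: "'b::topological_space measure \<Rightarrow> 'b set" where
  "measure_support N = {x. \<forall>U. open U \<longrightarrow> x \<in> U \<longrightarrow> 0 < emeasure N U}"

definition stationary_ergodic :: "'b measure \<Rightarrow> ('b \<Rightarrow> 'b) \<Rightarrow> bool" where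
  "stationary_ergodic P T \<longleftrightarrow>
     T \<in> P \<rightarrow>\<^sub>M P \<and> distr P P T = P \<and>
     (\<forall>A\<in>sets P. T -` A \<inter> space P = A \<longrightarrow> emeasure P A = 0 \<or> emeasure P A = 1)"

definition shift_i :: "(int \<times> nat \<Rightarrow> 'c) \<Rightarrow> (int \<times> nat \<Rightarrow> 'c)" where
  "shift_i f = (\<lambda>(i, t). f (i + 1, t))"
definition shift_t :: "(int \<times> nat \<Rightarrow> 'c) \<Rightarrow> (int \<times> nat \<Rightarrow> 'c)" where
  "shift_t f = (\<lambda>(i, t). f (i, Suc t))"

end

theory Submission
  imports Defs
begin

(*
  The update splits the value y at a site into a part that stays and a part that moves one
  site to the right, both of the sign of y and with absolute values adding up to |y|.  Hence
  |Y(i,t+1)| <= |stay(i,t)| + |move(i-1,t)|, and by stationarity both sides have the same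
  expectation, so almost surely a positive and a negative part never meet.  If Y(0,0) took
  both signs with positive probability, ergodicity in i would almost surely produce a
  negative value to the left of a positive one with only zeros in between.  Since Y(.,0) is
  independent of the weights and 0 lies in the support of their law, with positive
  probability all weights in the space-time box between the two are small.  Then the
  negative value travels right one site per step while the positive one stays put, and
  they meet: a cancellation of positive probability.
*)

section \<open>Pathwise dynamics of the update\<close>

definition sjr_stay :: "real \<times> real \<Rightarrow> real" where
  "sjr_stay p = pos_part (pos_part (fst p) - pos_part (snd p)) - min (neg_part (fst p)) (neg_part (snd p))"

definition sjr_move :: "real \<times> real \<Rightarrow> real" where
  "sjr_move p = min (pos_part (fst p)) (pos_part (snd p)) - pos_part (neg_part (fst p) - neg_part (snd p))"

lemma sjr_update_eq_stay_move:
  "sjr_update Y W i = sjr_stay (Y i, W i) + sjr_move (Y (i - 1), W (i - 1))"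
  unfolding sjr_update_def sjr_stay_def sjr_move_def by simp

lemma abs_sjr_stay_add_abs_sjr_move: "\<bar>sjr_stay p\<bar> + \<bar>sjr_move p\<bar> = \<bar>fst p\<bar>"
  unfolding sjr_stay_def sjr_move_def pos_part_def neg_part_def by (auto simp: min_def max_def)

lemma abs_sjr_stay_le: "\<bar>sjr_stay p\<bar> \<le> \<bar>fst p\<bar>"
  and abs_sjr_move_le: "\<bar>sjr_move p\<bar> \<le> \<bar>fst p\<bar>"
  using abs_sjr_stay_add_abs_sjr_move[of p] by auto

lemma sjr_stay_zero [simp]: "sjr_stay (0, w) = 0"
  and sjr_move_zero [simp]: "sjr_move (0, w) = 0"
  unfolding sjr_stay_def sjr_move_def pos_part_def neg_part_def by auto

lemma sjr_stay_ge: "b \<le> y \<Longrightarrow> \<bar>w\<bar> < e \<Longrightarrow> e \<le> b \<Longrightarrow> b - e \<le> sjr_stay (y, w)"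
  unfolding sjr_stay_def pos_part_def neg_part_def by (auto simp: min_def max_def)

lemma sjr_move_le: "y \<le> - b \<Longrightarrow> \<bar>w\<bar> < e \<Longrightarrow> e \<le> b \<Longrightarrow> sjr_move (y, w) \<le> e - b"
  unfolding sjr_move_def pos_part_def neg_part_def by (auto simp: min_def max_def)

lemma borel_measurable_sjr_stay [measurable]: "sjr_stay \<in> borel_measurable borel"
  and borel_measurable_sjr_move [measurable]: "sjr_move \<in> borel_measurable borel"
  unfolding sjr_stay_def sjr_move_def pos_part_def neg_part_def
  by (intro borel_measurable_continuous_onI continuous_intros)+

definition colliding_pair :: "(int \<Rightarrow> real) \<Rightarrow> int \<Rightarrow> nat \<Rightarrow> real \<Rightarrow> bool" where
  "colliding_pair y j n a \<longleftrightarrow>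
     y j \<le> - a \<and> (\<forall>i. j < i \<and> i \<le> j + int n \<longrightarrow> y i = 0) \<and> a \<le> y (j + int n + 1)"

(* The amplitude is taken from the countable set of all 1 / (m + 1), so that a colliding pair
  of positive probability can be extracted by countable additivity. *)
lemma ex_colliding_pair:
  fixes y :: "int \<Rightarrow> real"
  assumes "j < k" "y j < 0" "0 < y k"
  shows "\<exists>j' n m. colliding_pair y j' n (inverse (real (Suc m)))"
  using assms
proof (induction "nat (k - j)" arbitrary: j k rule: less_induct)
  case less
  show ?case
  proof (cases "\<exists>i. j < i \<and> i < k \<and> y i \<noteq> 0")
    case True
    then obtain i where i: "j < i" "i < k" "y i \<noteq> 0" by blast
    show ?thesis
    proof (cases "0 < y i")
      case True
      then show ?thesis using less.hyps[of i j] i less.prems by auto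
    next
      case False
      then show ?thesis using less.hyps[of k i] i less.prems by auto
    qed
  next
    case False
    obtain m where m: "inverse (real (Suc m)) < min (- y j) (y k)"
      using reals_Archimedean[of "min (- y j) (y k)"] less.prems by auto
    have "colliding_pair y j (nat (k - j - 1)) (inverse (real (Suc m)))"
      unfolding colliding_pair_def using False m less.prems(1) by auto
    then show ?thesis by blast
  qed
qed

(* With weights below e, the negative value advances one site per step while the positive
  one stays put, and each loses at most e per step. *)
lemma sjr_colliding_pair_invariant:
  fixes Yf Wf :: "nat \<Rightarrow> int \<Rightarrow> real"
  assumes step: "\<And>t. Yf (Suc t) = sjr_update (Yf t) (Wf t)"
    and init: "colliding_pair (Yf 0) j n a"
    and small: "\<And>i t. j \<le> i \<Longrightarrow> i \<le> j + int n + 1 \<Longrightarrow> t < n \<Longrightarrow> \<bar>Wf t i\<bar> < e"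
    and "real n * e \<le> a" "t \<le> n"
  shows "colliding_pair (Yf t) (j + int t) (n - t) (a - real t * e)"
  using \<open>t \<le> n\<close>
proof (induction t)
  case 0
  then show ?case using init by simp
next
  case (Suc t)
  define b where "b = a - real t * e"
  have IH: "colliding_pair (Yf t) (j + int t) (n - t) b"
    using Suc by (simp add: b_def)
  have "0 < e" using small[of j t] Suc.prems by fastforce
  then have "real (Suc t) * e \<le> real n * e"
    using Suc.prems by (intro mult_right_mono) auto
  then have "e \<le> b" using \<open>real n * e \<le> a\<close> by (simp add: b_def algebra_simps)
  have Wj: "\<bar>Wf t (j + int t)\<bar> < e" and Wk: "\<bar>Wf t (j + int n + 1)\<bar> < e"
    using small Suc.prems by auto
  have "Yf (Suc t) (j + int (Suc t)) = sjr_move (Yf t (j + int t), Wf t (j + int t))"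
    using IH Suc.prems by (simp add: step sjr_update_eq_stay_move colliding_pair_def)
  also have "\<dots> \<le> - (b - e)"
    using sjr_move_le[OF _ Wj \<open>e \<le> b\<close>] IH by (simp add: colliding_pair_def)
  finally have left: "Yf (Suc t) (j + int (Suc t)) \<le> - (a - real (Suc t) * e)"
    by (simp add: b_def algebra_simps)
  have "Yf (Suc t) (j + int n + 1) = sjr_stay (Yf t (j + int n + 1), Wf t (j + int n + 1))"
    using IH Suc.prems by (simp add: step sjr_update_eq_stay_move colliding_pair_def)
  also have "b - e \<le> \<dots>"
    using sjr_stay_ge[OF _ Wk \<open>e \<le> b\<close>] IH Suc.prems by (simp add: colliding_pair_def)
  finally have right: "a - real (Suc t) * e \<le> Yf (Suc t) (j + int n + 1)"
    by (simp add: b_def algebra_simps)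
  have "Yf (Suc t) i = 0" if "j + int (Suc t) < i" "i \<le> j + int n" for i
    using IH that Suc.prems by (simp add: step sjr_update_eq_stay_move colliding_pair_def)
  with left right Suc.prems show ?case by (simp add: colliding_pair_def)
qed

lemma sjr_colliding_pair_cancels:
  fixes Yf Wf :: "nat \<Rightarrow> int \<Rightarrow> real"
  assumes step: "\<And>t. Yf (Suc t) = sjr_update (Yf t) (Wf t)"
    and init: "colliding_pair (Yf 0) j n a"
    and small: "\<And>i t. j \<le> i \<Longrightarrow> i \<le> j + int n + 1 \<Longrightarrow> t \<le> n \<Longrightarrow> \<bar>Wf t i\<bar> < e"
    and "real (Suc n) * e < a"
  shows "\<bar>Yf (Suc n) (j + int n + 1)\<bar>
    < \<bar>sjr_stay (Yf n (j + int n + 1), Wf n (j + int n + 1))\<bar> + \<bar>sjr_move (Yf n (j + int n), Wf n (j + int n))\<bar>"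
proof -
  define b where "b = a - real n * e"
  have "0 < e"
    using small[of j n] by fastforce
  then have "e < b"
    using \<open>real (Suc n) * e < a\<close> by (simp add: b_def algebra_simps)
  have "colliding_pair (Yf n) (j + int n) (n - n) b"
    unfolding b_def using \<open>0 < e\<close> \<open>real (Suc n) * e < a\<close>
    by (intro sjr_colliding_pair_invariant[OF step init]) (auto intro: small simp: algebra_simps)
  then have left: "Yf n (j + int n) \<le> - b" and right: "b \<le> Yf n (j + int n + 1)"
    by (simp_all add: colliding_pair_def)
  have "sjr_move (Yf n (j + int n), Wf n (j + int n)) < 0"
    using sjr_move_le[OF left small[of "j + int n" n]] \<open>e < b\<close> by simp
  moreover have "0 < sjr_stay (Yf n (j + int n + 1), Wf n (j + int n + 1))"
    using sjr_stay_ge[OF right small[of "j + int n + 1" n]] \<open>e < b\<close> by simp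
  moreover have "Yf (Suc n) (j + int n + 1)
      = sjr_stay (Yf n (j + int n + 1), Wf n (j + int n + 1)) + sjr_move (Yf n (j + int n), Wf n (j + int n))"
    by (simp add: step sjr_update_eq_stay_move)
  ultimately show ?thesis
    by linarith
qed

lemma ex_pos_mult_less:
  fixes a c :: real
  assumes "0 < a"
  shows "\<exists>e>0. c * e < a"
proof (intro exI conjI)
  show "0 < a / (\<bar>c\<bar> + 1)"
    using assms by simp
  have "c * (a / (\<bar>c\<bar> + 1)) \<le> \<bar>c\<bar> * (a / (\<bar>c\<bar> + 1))"
    using assms by (intro mult_right_mono) auto
  also have "\<dots> < (\<bar>c\<bar> + 1) * (a / (\<bar>c\<bar> + 1))"
    using assms by (intro mult_strict_right_mono) auto
  finally show "c * (a / (\<bar>c\<bar> + 1)) < a"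
    by simp
qed

section \<open>Measure-preserving and ergodic maps\<close>

definition measure_preserving :: "'b measure \<Rightarrow> ('b \<Rightarrow> 'b) \<Rightarrow> bool" where
  "measure_preserving P T \<longleftrightarrow> T \<in> P \<rightarrow>\<^sub>M P \<and> distr P P T = P"

lemma stationary_ergodic_measure_preserving:
  "stationary_ergodic P T \<Longrightarrow> measure_preserving P T"
  unfolding stationary_ergodic_def measure_preserving_def by blast

lemma distr_funpow_measure_preserving:
  assumes "measure_preserving P T" and g: "g \<in> P \<rightarrow>\<^sub>M N"
  shows "distr P N (\<lambda>x. g ((T ^^ n) x)) = distr P N g"
proof (induction n)
  case (Suc n)
  have T: "T \<in> P \<rightarrow>\<^sub>M P" and preserve: "distr P P T = P"
    using assms(1) unfolding measure_preserving_def by auto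
  have "(\<lambda>x. g ((T ^^ Suc n) x)) = (\<lambda>x. g ((T ^^ n) x)) \<circ> T"
    by (simp add: funpow_swap1 comp_def)
  then have "distr P N (\<lambda>x. g ((T ^^ Suc n) x)) = distr (distr P P T) N (\<lambda>x. g ((T ^^ n) x))"
    using distr_distr[OF measurable_comp[OF measurable_compose_n[OF T] g] T] by (simp add: comp_def)
  also have "\<dots> = distr P N g" using Suc preserve by simp
  finally show ?case .
qed simp

lemma vimage_visits_after:
  assumes "T \<in> P \<rightarrow>\<^sub>M P"
  shows "T -` {x \<in> space P. \<exists>k\<ge>n. (T ^^ k) x \<in> A} \<inter> space P = {x \<in> space P. \<exists>k\<ge>Suc n. (T ^^ k) x \<in> A}"
proof -
  have "(\<exists>k\<ge>n. (T ^^ k) (T x) \<in> A) \<longleftrightarrow> (\<exists>k\<ge>Suc n. (T ^^ k) x \<in> A)" for x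
    by (metis (no_types) Suc_le_D Suc_le_mono funpow_Suc_right o_apply)
  then show ?thesis
    using measurable_space[OF assms] by auto
qed

lemma emeasure_visits_after_measure_preserving:
  assumes "measure_preserving P T" and [measurable]: "A \<in> sets P"
  shows "emeasure P {x \<in> space P. \<exists>k\<ge>n. (T ^^ k) x \<in> A} = emeasure P {x \<in> space P. \<exists>k\<ge>0. (T ^^ k) x \<in> A}"
proof (induction n)
  case (Suc n)
  have T [measurable]: "T \<in> P \<rightarrow>\<^sub>M P" and preserve: "distr P P T = P"
    using assms(1) unfolding measure_preserving_def by auto
  have "emeasure P {x \<in> space P. \<exists>k\<ge>Suc n. (T ^^ k) x \<in> A}
      = emeasure P (T -` {x \<in> space P. \<exists>k\<ge>n. (T ^^ k) x \<in> A} \<inter> space P)"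
    by (simp only: vimage_visits_after[OF T])
  also have "\<dots> = emeasure (distr P P T) {x \<in> space P. \<exists>k\<ge>n. (T ^^ k) x \<in> A}"
    by (rule emeasure_distr[symmetric]) measurable
  also have "\<dots> = emeasure P {x \<in> space P. \<exists>k\<ge>0. (T ^^ k) x \<in> A}"
    using Suc by (simp add: preserve)
  finally show ?case .
qed simp

lemma stationary_ergodic_AE_recurrence:
  assumes "prob_space P" and erg: "stationary_ergodic P T"
    and A: "A \<in> sets P" "emeasure P A \<noteq> 0"
  shows "AE x in P. \<forall>n. \<exists>k\<ge>n. (T ^^ k) x \<in> A"
proof -
  interpret prob_space P by fact
  have T [measurable]: "T \<in> P \<rightarrow>\<^sub>M P"
    and ergodic: "\<And>B. B \<in> sets P \<Longrightarrow> T -` B \<inter> space P = B \<Longrightarrow> emeasure P B = 0 \<or> emeasure P B = 1"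
    using erg unfolding stationary_ergodic_def by auto
  define U where "U n = {x \<in> space P. \<exists>k\<ge>n. (T ^^ k) x \<in> A}" for n
  have U_sets [measurable]: "U n \<in> sets P" for n
    unfolding U_def using A(1) by measurable
  have "decseq U"
    unfolding decseq_def U_def by (auto intro: order_trans)
  have "emeasure P A \<le> emeasure P (U 0)"
  proof (rule emeasure_mono)
    show "A \<subseteq> U 0"
      using sets.sets_into_space[OF A(1)] by (auto simp: U_def intro: exI[of _ 0])
  qed simp
  also have "\<dots> = (INF n. emeasure P (U n))"
    using emeasure_visits_after_measure_preserving[OF stationary_ergodic_measure_preserving[OF erg] A(1)]
    by (simp add: U_def)
  also have "\<dots> = emeasure P (\<Inter>n. U n)"
    by (rule INF_emeasure_decseq) (auto simp: \<open>decseq U\<close> emeasure_finite)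
  finally have "emeasure P (\<Inter>n. U n) \<noteq> 0"
    using A(2) by (auto simp: zero_less_iff_neq_zero[symmetric])
  moreover have "T -` (\<Inter>n. U n) \<inter> space P = (\<Inter>n. U (Suc n))"
    by (auto simp: U_def vimage_visits_after[OF T, symmetric])
  moreover have "(\<Inter>n. U (Suc n)) = (\<Inter>n. U n)"
    using \<open>decseq U\<close> unfolding decseq_Suc_iff by blast
  ultimately have "emeasure P (\<Inter>n. U n) = 1"
    using ergodic[of "\<Inter>n. U n"] by simp
  then have "AE x in P. x \<in> (\<Inter>n. U n)"
    by (intro AE_prob_1) (simp add: emeasure_eq_measure)
  then show ?thesis
    by eventually_elim (auto simp: U_def)
qed

lemma funpow_shift_i: "(shift_i ^^ n) f = (\<lambda>(i, t). f (i + int n, t))"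
  by (induction n arbitrary: f) (auto simp: shift_i_def funpow_Suc_right algebra_simps)

lemma funpow_shift_t: "(shift_t ^^ n) f = (\<lambda>(i, t). f (i, t + n))"
  by (induction n arbitrary: f) (auto simp: shift_t_def funpow_Suc_right)

lemma distr_coordinate_stationary_array:
  assumes sets_Q: "sets Q = sets (PiM UNIV (\<lambda>_. N))"
    and "measure_preserving Q shift_i" "measure_preserving Q shift_t"
  shows "distr Q N (\<lambda>f. f (i, t)) = distr Q N (\<lambda>f. f (0, 0))"
proof -
  have coord[measurable]: "(\<lambda>f. f p) \<in> Q \<rightarrow>\<^sub>M N" for p
    using measurable_component_singleton[of p UNIV "\<lambda>_. N"] by (simp add: measurable_cong_sets[OF sets_Q])
  have shift_right: "distr Q N (\<lambda>f. f (i + int m, t)) = distr Q N (\<lambda>f. f (i, t))" for i m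
    using distr_funpow_measure_preserving[OF assms(2) coord[of "(i, t)"], of m] by (simp add: funpow_shift_i)
  have "distr Q N (\<lambda>f. f (i, t)) = distr Q N (\<lambda>f. f (0, t))"
  proof (cases "0 \<le> i")
    case True
    then show ?thesis using shift_right[of 0 "nat i"] by simp
  next
    case False
    then show ?thesis using shift_right[of i "nat (- i)"] by simp
  qed
  also have "\<dots> = distr Q N (\<lambda>f. f (0, 0))"
    using distr_funpow_measure_preserving[OF assms(3) coord[of "(0, 0)"], of t] by (simp add: funpow_shift_t)
  finally show ?thesis .
qed

lemma (in prob_space) ex_prob_pos_of_AE_ex:
  fixes P :: "'b :: countable \<Rightarrow> 'a \<Rightarrow> bool"
  assumes "AE x in M. \<exists>c. P c x" and [measurable]: "\<And>c. Measurable.pred M (P c)"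
  shows "\<exists>c. 0 < prob {x \<in> space M. P c x}"
proof (rule ccontr)
  assume none: "\<not> ?thesis"
  have "prob {x \<in> space M. P c x} = 0" for c
  proof -
    have "\<not> 0 < prob {x \<in> space M. P c x}"
      using none by blast
    then show ?thesis
      using measure_nonneg[of M "{x \<in> space M. P c x}"] by linarith
  qed
  then have "AE x in M. \<not> P c x" for c
    using prob_eq_0[of "{x \<in> space M. P c x}"] by simp
  then have "AE x in M. \<forall>c. \<not> P c x"
    by (simp add: AE_all_countable)
  with assms(1) have "AE x in M. False"
    by eventually_elim blast
  then show False
    by simp
qed

lemma (in prob_space) prob_all_in_ball_pos:
  fixes X :: "'i \<Rightarrow> 'a \<Rightarrow> real"
  assumes indep: "indep_vars (\<lambda>_. borel) X I" and law: "\<And>i. i \<in> I \<Longrightarrow> distr M borel (X i) = lam"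
    and c: "c \<in> measure_support lam" and J: "finite J" "J \<subseteq> I" and "0 < e"
  shows "0 < prob {\<omega> \<in> space M. \<forall>i\<in>J. X i \<omega> \<in> ball c e}"
proof (cases "J = {}")
  case True
  then show ?thesis by (simp add: prob_space)
next
  case False
  have X [measurable]: "X i \<in> borel_measurable M" if "i \<in> I" for i
    using indep that unfolding indep_vars_def by auto
  have ball_pos: "0 < prob (X i -` ball c e \<inter> space M)" if "i \<in> I" for i
  proof -
    have "0 < emeasure lam (ball c e)"
      using c \<open>0 < e\<close> unfolding measure_support_def by auto
    also have "emeasure lam (ball c e) = emeasure M (X i -` ball c e \<inter> space M)"
      unfolding law[OF that, symmetric] using that by (intro emeasure_distr) auto
    finally show ?thesis
      by (simp add: emeasure_eq_measure)
  qed
  have "{\<omega> \<in> space M. \<forall>i\<in>J. X i \<omega> \<in> ball c e} = (\<Inter>i\<in>J. X i -` ball c e \<inter> space M)"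
    using False by auto
  also have "prob \<dots> = (\<Prod>i\<in>J. prob (X i -` ball c e \<inter> space M))"
    using indep_varsD[OF indep False J] by simp
  also have "\<dots> > 0"
    using ball_pos J by (intro prod_pos) auto
  finally show ?thesis .
qed

section \<open>The SJR model\<close>

locale sjr_model = prob_space M for M :: "'a measure" +
  fixes W :: "int \<Rightarrow> int \<Rightarrow> 'a \<Rightarrow> real" and Y :: "int \<Rightarrow> nat \<Rightarrow> 'a \<Rightarrow> real"
  assumes measurable_W [measurable]: "\<And>i t. W i t \<in> borel_measurable M"
    and measurable_Y0: "\<And>i. Y i 0 \<in> borel_measurable M"
    and Y_Suc: "\<And>i t \<omega>. \<omega> \<in> space M \<Longrightarrow> Y i (Suc t) \<omega> = sjr_update (\<lambda>j. Y j t \<omega>) (\<lambda>j. W j (int t) \<omega>) i"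
begin

abbreviation site :: "int \<Rightarrow> nat \<Rightarrow> 'a \<Rightarrow> real \<times> real" where
  "site i t \<equiv> \<lambda>\<omega>. (Y i t \<omega>, W i (int t) \<omega>)"

abbreviation array_law :: "(int \<times> nat \<Rightarrow> real \<times> real) measure" where
  "array_law \<equiv> distr M (PiM UNIV (\<lambda>_. borel)) (\<lambda>\<omega> (i, t). (Y i t \<omega>, W i (int t) \<omega>))"

lemma Y_Suc_stay_move:
  "\<omega> \<in> space M \<Longrightarrow> Y i (Suc t) \<omega> = sjr_stay (site i t \<omega>) + sjr_move (site (i - 1) t \<omega>)"
  by (simp add: Y_Suc sjr_update_eq_stay_move)

lemma measurable_Y [measurable]: "Y i t \<in> borel_measurable M"
proof (induction t arbitrary: i)
  case 0
  show ?case by (rule measurable_Y0)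
next
  case (Suc t)
  have [measurable]: "Y j t \<in> borel_measurable M" for j
    by (rule Suc)
  show ?case
    by (subst measurable_cong[OF Y_Suc_stay_move]) measurable
qed

(* Stated for arbitrary indices so that it still applies once the simplifier has turned
  W 0 (int 0) into W 0 0. *)
lemma measurable_Y_W [measurable]: "(\<lambda>\<omega>. (Y i t \<omega>, W j s \<omega>)) \<in> M \<rightarrow>\<^sub>M borel"
  unfolding borel_prod[symmetric] by measurable

lemma measurable_array: "(\<lambda>\<omega> (i, t). (Y i t \<omega>, W i (int t) \<omega>)) \<in> M \<rightarrow>\<^sub>M PiM UNIV (\<lambda>_. borel)"
proof -
  have "(\<lambda>\<omega> (i, t). (Y i t \<omega>, W i (int t) \<omega>)) = (\<lambda>\<omega> p. site (fst p) (snd p) \<omega>)"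
    by (auto simp: fun_eq_iff)
  then show ?thesis
    by (simp add: measurable_PiM_single')
qed

lemma pred_colliding_pair_Y0 [measurable]: "Measurable.pred M (\<lambda>\<omega>. colliding_pair (\<lambda>i. Y i 0 \<omega>) j n a)"
  unfolding colliding_pair_def by measurable

lemma prob_space_array_law: "prob_space array_law"
  by (rule prob_space_distr[OF measurable_array])

lemma distr_site_eq_array_law: "distr M borel (site i t) = distr array_law borel (\<lambda>f. f (i, t))"
  by (subst distr_distr[OF measurable_component_singleton measurable_array]) (auto simp: comp_def)

lemma distr_site_stationary:
  assumes "measure_preserving array_law shift_i" "measure_preserving array_law shift_t"
  shows "distr M borel (site i t) = distr M borel (site 0 0)"
  unfolding distr_site_eq_array_law by (rule distr_coordinate_stationary_array[OF _ assms]) simp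

lemma integral_site_stationary:
  fixes g :: "real \<times> real \<Rightarrow> real"
  assumes law: "\<And>i t. distr M borel (site i t) = distr M borel (site 0 0)"
    and [measurable]: "g \<in> borel_measurable borel"
  shows "(\<integral>\<omega>. g (site i t \<omega>) \<partial>M) = (\<integral>\<omega>. g (site 0 0 \<omega>) \<partial>M)"
proof -
  have "(\<integral>\<omega>. g (site i t \<omega>) \<partial>M) = integral\<^sup>L (distr M borel (site i t)) g"
    by (rule integral_distr[OF measurable_Y_W, symmetric]) simp
  also have "\<dots> = integral\<^sup>L (distr M borel (site 0 0)) g"
    unfolding law[of i t] ..
  also have "\<dots> = (\<integral>\<omega>. g (site 0 0 \<omega>) \<partial>M)"
    by (rule integral_distr[OF measurable_Y_W]) simp
  finally show ?thesis .
qed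

lemma integrable_site_stationary:
  fixes g :: "real \<times> real \<Rightarrow> real"
  assumes law: "\<And>i t. distr M borel (site i t) = distr M borel (site 0 0)"
    and integrable: "integrable M (Y 0 0)"
    and [measurable]: "g \<in> borel_measurable borel" and bound: "\<And>p. \<bar>g p\<bar> \<le> \<bar>fst p\<bar>"
  shows "integrable M (\<lambda>\<omega>. g (site i t \<omega>))"
proof -
  have "integrable M (\<lambda>\<omega>. g (site 0 0 \<omega>))"
    by (rule Bochner_Integration.integrable_bound[OF integrable]) (use bound in auto)
  then have "integrable (distr M borel (site 0 0)) g"
    by (subst integrable_distr_eq[OF measurable_Y_W]) simp_all
  then have "integrable (distr M borel (site i t)) g"
    unfolding law[of i t] .
  then show ?thesis
    by (subst (asm) integrable_distr_eq[OF measurable_Y_W]) simp_all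
qed

lemma AE_no_cancellation:
  assumes law: "\<And>i t. distr M borel (site i t) = distr M borel (site 0 0)"
    and integrable: "integrable M (Y 0 0)"
  shows "AE \<omega> in M. \<forall>i t. \<bar>Y i (Suc t) \<omega>\<bar> = \<bar>sjr_stay (site i t \<omega>)\<bar> + \<bar>sjr_move (site (i - 1) t \<omega>)\<bar>"
proof -
  have [measurable]: "(\<lambda>p. \<bar>sjr_stay p\<bar>) \<in> borel_measurable borel" "(\<lambda>p. \<bar>sjr_move p\<bar>) \<in> borel_measurable borel"
    by measurable
  have [measurable]: "(\<lambda>p::real \<times> real. \<bar>fst p\<bar>) \<in> borel_measurable borel"
    by (intro borel_measurable_continuous_onI continuous_intros)+
  note integral_site = integral_site_stationary[OF law]
  have integrable_stay: "integrable M (\<lambda>\<omega>. \<bar>sjr_stay (site i t \<omega>)\<bar>)"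
    and integrable_move: "integrable M (\<lambda>\<omega>. \<bar>sjr_move (site i t \<omega>)\<bar>)"
    and integrable_Y: "integrable M (\<lambda>\<omega>. \<bar>Y i t \<omega>\<bar>)" for i t
    using integrable_site_stationary[OF law integrable, of "\<lambda>p. \<bar>sjr_stay p\<bar>"]
      integrable_site_stationary[OF law integrable, of "\<lambda>p. \<bar>sjr_move p\<bar>"]
      integrable_site_stationary[OF law integrable, of "\<lambda>p. \<bar>fst p\<bar>"]
    by (simp_all add: abs_sjr_stay_le abs_sjr_move_le)
  have "AE \<omega> in M. \<bar>Y i (Suc t) \<omega>\<bar> = \<bar>sjr_stay (site i t \<omega>)\<bar> + \<bar>sjr_move (site (i - 1) t \<omega>)\<bar>" for i t
  proof (rule integral_ineq_eq_0_then_AE)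
    show "AE \<omega> in M. \<bar>Y i (Suc t) \<omega>\<bar> \<le> \<bar>sjr_stay (site i t \<omega>)\<bar> + \<bar>sjr_move (site (i - 1) t \<omega>)\<bar>"
      by (intro AE_I2) (simp add: Y_Suc_stay_move abs_triangle_ineq)
    have "(\<integral>\<omega>. \<bar>sjr_stay (site i t \<omega>)\<bar> + \<bar>sjr_move (site (i - 1) t \<omega>)\<bar> \<partial>M)
        = (\<integral>\<omega>. \<bar>sjr_stay (site 0 0 \<omega>)\<bar> \<partial>M) + (\<integral>\<omega>. \<bar>sjr_move (site 0 0 \<omega>)\<bar> \<partial>M)"
      using integral_site[of "\<lambda>p. \<bar>sjr_stay p\<bar>" i t] integral_site[of "\<lambda>p. \<bar>sjr_move p\<bar>" "i - 1" t]
      by (simp add: integrable_stay integrable_move)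
    also have "\<dots> = (\<integral>\<omega>. \<bar>Y 0 0 \<omega>\<bar> \<partial>M)"
      using integrable_stay[of 0 0] integrable_move[of 0 0]
      by (simp add: Bochner_Integration.integral_add[symmetric] abs_sjr_stay_add_abs_sjr_move)
    also have "\<dots> = (\<integral>\<omega>. \<bar>Y i (Suc t) \<omega>\<bar> \<partial>M)"
      using integral_site[of "\<lambda>p. \<bar>fst p\<bar>" i "Suc t"] by simp
    finally show "(\<integral>\<omega>. \<bar>Y i (Suc t) \<omega>\<bar> \<partial>M)
        = (\<integral>\<omega>. \<bar>sjr_stay (site i t \<omega>)\<bar> + \<bar>sjr_move (site (i - 1) t \<omega>)\<bar> \<partial>M)" ..
  qed (simp_all add: integrable_stay integrable_move integrable_Y)
  then show ?thesis
    by (simp add: AE_all_countable)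
qed

lemma AE_recurrence_Y0:
  assumes erg: "stationary_ergodic array_law shift_i" and [measurable]: "S \<in> sets borel"
    and pos: "emeasure M {\<omega> \<in> space M. Y 0 0 \<omega> \<in> S} \<noteq> 0"
  shows "AE \<omega> in M. \<forall>n. \<exists>k\<ge>n. Y k 0 \<omega> \<in> S"
proof -
  have [measurable]: "(fst :: real \<times> real \<Rightarrow> real) \<in> borel_measurable borel"
    unfolding borel_prod[symmetric] by measurable
  define A where "A = {f \<in> space array_law. fst (f (0, 0)) \<in> S}"
  have A_sets: "A \<in> sets array_law"
    unfolding A_def by measurable
  have "emeasure array_law A = emeasure M {\<omega> \<in> space M. Y 0 0 \<omega> \<in> S}"
  proof -
    have "(\<lambda>\<omega> (i, t). (Y i t \<omega>, W i (int t) \<omega>)) -` A \<inter> space M = {\<omega> \<in> space M. Y 0 0 \<omega> \<in> S}"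
      by (auto simp: A_def space_PiM)
    then show ?thesis
      using emeasure_distr[OF measurable_array A_sets[simplified]] by simp
  qed
  then have "AE f in array_law. \<forall>n. \<exists>k\<ge>n. (shift_i ^^ k) f \<in> A"
    using stationary_ergodic_AE_recurrence[OF prob_space_array_law erg A_sets] pos by simp
  then have "AE f in array_law. \<forall>n. \<exists>k\<ge>n. fst (f (int k, 0)) \<in> S"
    by eventually_elim (auto simp: A_def funpow_shift_i)
  then have "AE \<omega> in M. \<forall>n. \<exists>k\<ge>n. Y (int k) 0 \<omega> \<in> S"
    by (subst (asm) AE_distr_iff[OF measurable_array]) simp_all
  then show ?thesis
  proof eventually_elim
    case (elim \<omega>)
    show ?case
    proof
      fix n :: int
      obtain k where "nat n \<le> k" "Y (int k) 0 \<omega> \<in> S"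
        using elim by blast
      then show "\<exists>k\<ge>n. Y k 0 \<omega> \<in> S"
        by (intro exI[of _ "int k"]) auto
    qed
  qed
qed

lemma ex_colliding_pair_prob_pos:
  assumes erg: "stationary_ergodic array_law shift_i"
    and "\<not> (AE \<omega> in M. 0 \<le> Y 0 0 \<omega>)" "\<not> (AE \<omega> in M. Y 0 0 \<omega> \<le> 0)"
  shows "\<exists>j n a. 0 < a \<and> 0 < prob {\<omega> \<in> space M. colliding_pair (\<lambda>i. Y i 0 \<omega>) j n a}"
proof -
  have neg: "emeasure M {\<omega> \<in> space M. Y 0 0 \<omega> \<in> {..<0}} \<noteq> 0"
    and pos: "emeasure M {\<omega> \<in> space M. Y 0 0 \<omega> \<in> {0<..}} \<noteq> 0"
    using assms(2,3) AE_iff_measurable[OF _ refl, of M "\<lambda>\<omega>. 0 \<le> Y 0 0 \<omega>"]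
      AE_iff_measurable[OF _ refl, of M "\<lambda>\<omega>. Y 0 0 \<omega> \<le> 0"] by (auto simp: not_le)
  have "AE \<omega> in M. \<forall>n. \<exists>k\<ge>n. Y k 0 \<omega> \<in> {..<0}" and "AE \<omega> in M. \<forall>n. \<exists>k\<ge>n. Y k 0 \<omega> \<in> {0<..}"
    by (rule AE_recurrence_Y0[OF erg _ neg] AE_recurrence_Y0[OF erg _ pos]; simp)+
  then have "AE \<omega> in M. \<exists>c.
      colliding_pair (\<lambda>i. Y i 0 \<omega>) (fst c) (fst (snd c)) (inverse (real (Suc (snd (snd c)))))"
  proof eventually_elim
    case (elim \<omega>)
    then obtain j k where "j < k" "Y j 0 \<omega> < 0" "0 < Y k 0 \<omega>"
      by (meson lessThan_iff greaterThan_iff zless_add1_eq order_less_le_trans)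
    then show ?case
      using ex_colliding_pair[of j k "\<lambda>i. Y i 0 \<omega>"] by auto
  qed
  then obtain c where "0 < prob {\<omega> \<in> space M.
      colliding_pair (\<lambda>i. Y i 0 \<omega>) (fst c) (fst (snd c)) (inverse (real (Suc (snd (snd c)))))}"
    by (rule exE[OF ex_prob_pos_of_AE_ex]) simp
  then show ?thesis
    by (intro exI conjI) auto
qed

lemma prob_colliding_pair_small_weights_pos:
  assumes W_indep: "indep_vars (\<lambda>_. borel) (\<lambda>p. W (fst p) (snd p)) UNIV"
    and W_law: "\<And>i t. distr M borel (W i t) = lam" and supp: "0 \<in> measure_support lam"
    and Y0_indep: "indep_set
          {(\<lambda>\<omega> i. Y i 0 \<omega>) -` A \<inter> space M | A. A \<in> sets (PiM (UNIV :: int set) (\<lambda>_. borel :: real measure))}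
          {(\<lambda>\<omega> p. W (fst p) (snd p) \<omega>) -` B \<inter> space M | B.
             B \<in> sets (PiM (UNIV :: (int \<times> int) set) (\<lambda>_. borel :: real measure))}"
    and pair: "0 < prob {\<omega> \<in> space M. colliding_pair (\<lambda>i. Y i 0 \<omega>) j n a}" and "0 < e"
  shows "0 < prob {\<omega> \<in> space M. colliding_pair (\<lambda>i. Y i 0 \<omega>) j n a
      \<and> (\<forall>i t. j \<le> i \<and> i \<le> j + int n + 1 \<and> t \<le> n \<longrightarrow> \<bar>W i (int t) \<omega>\<bar> < e)}"
proof -
  define J where "J = {j..j + int n + 1} \<times> int ` {..n}"
  define C where "C = {\<omega> \<in> space M. colliding_pair (\<lambda>i. Y i 0 \<omega>) j n a}"
  define S where "S = {\<omega> \<in> space M. \<forall>p\<in>J. W (fst p) (snd p) \<omega> \<in> ball 0 e}"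
  have "0 < prob S"
    unfolding S_def using W_law \<open>0 < e\<close>
    by (intro prob_all_in_ball_pos[OF W_indep _ supp]) (auto simp: J_def)
  have "prob (C \<inter> S) = prob C * prob S"
  proof (rule indep_setD[OF Y0_indep])
    let ?C = "{y \<in> space (PiM UNIV (\<lambda>_. borel)). colliding_pair y j n a}"
    have "?C \<in> sets (PiM UNIV (\<lambda>_. borel))"
      unfolding colliding_pair_def by measurable
    moreover have "C = (\<lambda>\<omega> i. Y i 0 \<omega>) -` ?C \<inter> space M"
      by (auto simp: C_def space_PiM)
    ultimately show "C \<in> {(\<lambda>\<omega> i. Y i 0 \<omega>) -` A \<inter> space M | A. A \<in> sets (PiM UNIV (\<lambda>_. borel))}"
      by blast
  next
    let ?S = "{w \<in> space (PiM UNIV (\<lambda>_. borel)). \<forall>p\<in>J. w p \<in> ball (0::real) e}"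
    have "finite J" and [measurable]: "ball (0::real) e \<in> sets borel"
      by (simp_all add: J_def)
    then have "?S \<in> sets (PiM UNIV (\<lambda>_. borel))"
      by measurable
    moreover have "S = (\<lambda>\<omega> p. W (fst p) (snd p) \<omega>) -` ?S \<inter> space M"
      by (auto simp: S_def space_PiM)
    ultimately show "S \<in> {(\<lambda>\<omega> p. W (fst p) (snd p) \<omega>) -` B \<inter> space M | B. B \<in> sets (PiM UNIV (\<lambda>_. borel))}"
      by blast
  qed
  also have "\<dots> > 0"
    using pair \<open>0 < prob S\<close> by (simp add: C_def)
  also have "C \<inter> S = {\<omega> \<in> space M. colliding_pair (\<lambda>i. Y i 0 \<omega>) j n a
      \<and> (\<forall>i t. j \<le> i \<and> i \<le> j + int n + 1 \<and> t \<le> n \<longrightarrow> \<bar>W i (int t) \<omega>\<bar> < e)}"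
    by (auto simp: C_def S_def J_def)
  finally show ?thesis .
qed

lemma colliding_pair_small_weights_cancel:
  assumes "\<omega> \<in> space M" and "colliding_pair (\<lambda>i. Y i 0 \<omega>) j n a"
    and "\<forall>i t. j \<le> i \<and> i \<le> j + int n + 1 \<and> t \<le> n \<longrightarrow> \<bar>W i (int t) \<omega>\<bar> < e"
    and "real (Suc n) * e < a"
  shows "\<bar>Y (j + int n + 1) (Suc n) \<omega>\<bar>
    < \<bar>sjr_stay (site (j + int n + 1) n \<omega>)\<bar> + \<bar>sjr_move (site (j + int n) n \<omega>)\<bar>"
proof -
  have step: "(\<lambda>i. Y i (Suc t) \<omega>) = sjr_update (\<lambda>i. Y i t \<omega>) (\<lambda>i. W i (int t) \<omega>)" for t
    using Y_Suc[OF \<open>\<omega> \<in> space M\<close>] by (simp add: fun_eq_iff)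
  show ?thesis
    by (rule sjr_colliding_pair_cancels[where Yf = "\<lambda>t i. Y i t \<omega>" and Wf = "\<lambda>t i. W i (int t) \<omega>"])
      (use step assms(2-) in auto)
qed

lemma prob_colliding_pair_eq_0:
  assumes W_indep: "indep_vars (\<lambda>_. borel) (\<lambda>p. W (fst p) (snd p)) UNIV"
    and W_law: "\<And>i t. distr M borel (W i t) = lam" and supp: "0 \<in> measure_support lam"
    and Y0_indep: "indep_set
          {(\<lambda>\<omega> i. Y i 0 \<omega>) -` A \<inter> space M | A. A \<in> sets (PiM (UNIV :: int set) (\<lambda>_. borel :: real measure))}
          {(\<lambda>\<omega> p. W (fst p) (snd p) \<omega>) -` B \<inter> space M | B.
             B \<in> sets (PiM (UNIV :: (int \<times> int) set) (\<lambda>_. borel :: real measure))}"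
    and no_cancellation: "AE \<omega> in M. \<forall>i t.
      \<bar>Y i (Suc t) \<omega>\<bar> = \<bar>sjr_stay (site i t \<omega>)\<bar> + \<bar>sjr_move (site (i - 1) t \<omega>)\<bar>"
    and "0 < a"
  shows "prob {\<omega> \<in> space M. colliding_pair (\<lambda>i. Y i 0 \<omega>) j n a} = 0"
proof (rule ccontr)
  assume "prob {\<omega> \<in> space M. colliding_pair (\<lambda>i. Y i 0 \<omega>) j n a} \<noteq> 0"
  then have pair: "0 < prob {\<omega> \<in> space M. colliding_pair (\<lambda>i. Y i 0 \<omega>) j n a}"
    using measure_nonneg[of M] by (simp add: order_less_le)
  obtain e where "0 < e" "real (Suc n) * e < a"
    using ex_pos_mult_less[OF \<open>0 < a\<close>] by blast
  define collides where "collides \<omega> \<longleftrightarrow> colliding_pair (\<lambda>i. Y i 0 \<omega>) j n a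
    \<and> (\<forall>i t. j \<le> i \<and> i \<le> j + int n + 1 \<and> t \<le> n \<longrightarrow> \<bar>W i (int t) \<omega>\<bar> < e)" for \<omega>
  have [measurable]: "Measurable.pred M collides"
    unfolding collides_def by measurable
  have "0 < prob {\<omega> \<in> space M. collides \<omega>}"
    using pair \<open>0 < e\<close> unfolding collides_def
    by (intro prob_colliding_pair_small_weights_pos[OF W_indep W_law supp Y0_indep])
  moreover have "AE \<omega> in M. \<not> collides \<omega>"
    using AE_space no_cancellation
  proof eventually_elim
    case (elim \<omega>)
    then show ?case
      using colliding_pair_small_weights_cancel[of \<omega> j n a e] \<open>real (Suc n) * e < a\<close>
      by (auto simp: collides_def)
  qed
  ultimately show False
    by (simp add: prob_Collect_eq_0[symmetric])
qed

end

theorem proposition3p10: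
  fixes M :: "'a measure"
    and W :: "int \<Rightarrow> int \<Rightarrow> 'a \<Rightarrow> real"
    and Y :: "int \<Rightarrow> nat \<Rightarrow> 'a \<Rightarrow> real"
    and lam :: "real measure"
    and mu :: "(int \<Rightarrow> real) measure"
  assumes P: "prob_space M"
    and W_indep: "prob_space.indep_vars M (\<lambda>_. borel) (\<lambda>p. W (fst p) (snd p)) UNIV"
    and W_law: "\<And>i t. distr M borel (W i t) = lam"
    and supp: "(0::real) \<in> measure_support lam"
    and Y0_meas: "\<And>i. Y i 0 \<in> borel_measurable M"
    and Y0_law: "distr M (PiM UNIV (\<lambda>_. borel)) (\<lambda>\<omega> i. Y i 0 \<omega>) = mu"
    and Y0_indep: "prob_space.indep_set M
          {(\<lambda>\<omega> i. Y i 0 \<omega>) -` A \<inter> space M | A.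
             A \<in> sets (PiM (UNIV :: int set) (\<lambda>_. borel :: real measure))}
          {(\<lambda>\<omega> p. W (fst p) (snd p) \<omega>) -` B \<inter> space M | B.
             B \<in> sets (PiM (UNIV :: (int \<times> int) set) (\<lambda>_. borel :: real measure))}"
    and rec: "\<And>i t \<omega>. \<omega> \<in> space M \<Longrightarrow>
          Y i (Suc t) \<omega> = sjr_update (\<lambda>j. Y j t \<omega>) (\<lambda>j. W j (int t) \<omega>) i"
    and invariant: "\<And>t. distr M (PiM UNIV (\<lambda>_. borel)) (\<lambda>\<omega> i. Y i t \<omega>) = mu"
    and integrable: "integrable M (Y 0 0)"
    and erg_i: "stationary_ergodic
          (distr M (PiM (UNIV :: (int \<times> nat) set) (\<lambda>_. borel :: (real \<times> real) measure))
             (\<lambda>\<omega> (i, t). (Y i t \<omega>, W i (int t) \<omega>))) shift_i"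
    and erg_t: "stationary_ergodic
          (distr M (PiM (UNIV :: (int \<times> nat) set) (\<lambda>_. borel :: (real \<times> real) measure))
             (\<lambda>\<omega> (i, t). (Y i t \<omega>, W i (int t) \<omega>))) shift_t"
  shows "(AE \<omega> in M. 0 \<le> Y 0 0 \<omega>) \<or> (AE \<omega> in M. Y 0 0 \<omega> \<le> 0)"
proof -
  interpret prob_space M
    by (rule P)
  interpret sjr_model M W Y
  proof
    show "W i t \<in> borel_measurable M" for i t
      using W_indep unfolding indep_vars_def by auto
  qed (use Y0_meas rec in auto)
  have no_cancellation: "AE \<omega> in M. \<forall>i t.
      \<bar>Y i (Suc t) \<omega>\<bar> = \<bar>sjr_stay (site i t \<omega>)\<bar> + \<bar>sjr_move (site (i - 1) t \<omega>)\<bar>"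
    using erg_i erg_t integrable
    by (intro AE_no_cancellation distr_site_stationary stationary_ergodic_measure_preserving)
  show ?thesis
  proof (rule ccontr)
    assume "\<not> ?thesis"
    then obtain j n a where "0 < a" and "0 < prob {\<omega> \<in> space M. colliding_pair (\<lambda>i. Y i 0 \<omega>) j n a}"
      using ex_colliding_pair_prob_pos[OF erg_i] by blast
    moreover have "prob {\<omega> \<in> space M. colliding_pair (\<lambda>i. Y i 0 \<omega>) j n a} = 0"
      using \<open>0 < a\<close> by (rule prob_colliding_pair_eq_0[OF W_indep W_law supp Y0_indep no_cancellation])
    ultimately show False
      by simp
  qed
qed

end
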